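(* Let $p_n(\mathbf y)$ be a linear sequence of symmetric functions of binomial type, and let $\theta,\phi$ be shift-invariant linear operators on $\Lambda$. Then for every $n\ge0$, $$\epsilon\,\theta\phi\, p_n(\mathbf y)=\sum_{k=0}^n\binom nk\big(\epsilon\,\theta\, p_k(\mathbf y)\big)\big(\epsilon\,\phi\, p_{n-k}(\mathbf y)\big).$$
   Context: $\Lambda$ is the algebra of complex symmetric functions in $\mathbf y=(y_1,y_2,\dots)$. A linear sequence of symmetric functions of binomial type is $$p_n(\mathbf y)=\sum_{\lambda\vdash n}\frac{n!}{\prod_i\lambda_i!}\Big(\prod_ia_{\lambda_i}\Big)m_\lambda(\mathbf y)$$ for complex numbers $a_0=1,a_1\ne0,a_2,\dots$, where $m_\lambda$ is the monomial symmetric function. A linear operator $\theta$ on $\Lambda$ is shift-invariant if $E^a\theta=\theta E^a$ for all $a\in\mathbb C$, where $E^ap(y_1,y_2,\dots)=p(a,y_1,y_2,\dots)$. $\epsilon p=p(0,0,\dots)$. *)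

theory Defs
  imports Complex_Main "HOL-Library.Multiset"
begin

text \<open>Symmetric functions in countably many variables y_1, y_2, ... (indexed here by
 0, 1, 2, ...) are modelled as formal power series: a coefficient function on
 monomials. A monomial is an exponent vector nat => nat with finite support.\<close>

type_synonym symfun = "(nat \<Rightarrow> nat) \<Rightarrow> complex"

definition monomials :: "(nat \<Rightarrow> nat) set" where
  "monomials = {\<beta>. finite {i. \<beta> i \<noteq> 0}}"

definition mdeg :: "(nat \<Rightarrow> nat) \<Rightarrow> nat" where
  "mdeg \<beta> = (\<Sum>i\<in>{i. \<beta> i \<noteq> 0}. \<beta> i)"

definition Lambda :: "symfun set" where
  "Lambda = {f. (\<forall>\<beta>. f \<beta> \<noteq> 0 \<longrightarrow> \<beta> \<in> monomials)
             \<and> (\<exists>d. \<forall>\<beta>. f \<beta> \<noteq> 0 \<longrightarrow> mdeg \<beta> \<le> d)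
             \<and> (\<forall>\<sigma> \<beta>. bij \<sigma> \<longrightarrow> f (\<beta> \<circ> \<sigma>) = f \<beta>)}"

definition shift_in :: "nat \<Rightarrow> (nat \<Rightarrow> nat) \<Rightarrow> (nat \<Rightarrow> nat)" where
  "shift_in j \<beta> = (\<lambda>i. if i = 0 then j else \<beta> (i - 1))"

text \<open>E^a p (y_1,y_2,...) = p(a, y_1, y_2, ...).\<close>
definition Eshift :: "complex \<Rightarrow> symfun \<Rightarrow> symfun" where
  "Eshift a p = (\<lambda>\<beta>. \<Sum>j\<in>{j. p (shift_in j \<beta>) \<noteq> 0}. a ^ j * p (shift_in j \<beta>))"

definition epsilon :: "symfun \<Rightarrow> complex" where
  "epsilon p = p (\<lambda>_. 0)"

definition linear_on_Lambda :: "(symfun \<Rightarrow> symfun) \<Rightarrow> bool" where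
  "linear_on_Lambda \<theta> \<longleftrightarrow> (\<forall>p\<in>Lambda. \<theta> p \<in> Lambda)
     \<and> (\<forall>p\<in>Lambda. \<forall>q\<in>Lambda. \<theta> (\<lambda>\<beta>. p \<beta> + q \<beta>) = (\<lambda>\<beta>. \<theta> p \<beta> + \<theta> q \<beta>))
     \<and> (\<forall>c. \<forall>p\<in>Lambda. \<theta> (\<lambda>\<beta>. c * p \<beta>) = (\<lambda>\<beta>. c * \<theta> p \<beta>))"

definition shift_invariant :: "(symfun \<Rightarrow> symfun) \<Rightarrow> bool" where
  "shift_invariant \<theta> \<longleftrightarrow> (\<forall>a. \<forall>p\<in>Lambda. Eshift a (\<theta> p) = \<theta> (Eshift a p))"

definition partitions :: "nat \<Rightarrow> nat multiset set" where
  "partitions n = {lam. (\<forall>i\<in>#lam. 0 < i) \<and> sum_mset lam = n}"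

definition msym :: "nat multiset \<Rightarrow> symfun" where
  "msym lam = (\<lambda>\<beta>. if \<beta> \<in> monomials \<and> image_mset \<beta> (mset_set {i. \<beta> i \<noteq> 0}) = lam
                  then 1 else 0)"

definition binom_seq :: "(nat \<Rightarrow> complex) \<Rightarrow> nat \<Rightarrow> symfun" where
  "binom_seq a n = (\<lambda>\<beta>. \<Sum>lam\<in>partitions n.
      (fact n / (\<Prod>i\<in>#lam. fact i)) * (\<Prod>i\<in>#lam. a i) * msym lam \<beta>)"

end

theory Submission
  imports Defs
begin

text \<open>Write \<open>p\<^sub>n\<close> for \<open>binom_seq a n\<close>. On a monomial \<open>y\<^sup>\<beta>\<close> of degree \<open>n\<close> its
  coefficient is \<open>n! \<Prod>\<^sub>i a(\<beta>\<^sub>i)/\<beta>\<^sub>i!\<close>, so substituting \<open>c\<close> for a new first variable gives the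
  binomial identity \<open>E\<^sup>c p\<^sub>n = \<Sum>\<^sub>k (n choose k) a\<^sub>k c\<^sup>k p\<^sub>n\<^sub>-\<^sub>k\<close>. For a shift-invariant linear
  \<open>\<phi>\<close>, comparing coefficients of \<open>c\<^sup>j\<close> in \<open>E\<^sup>c \<phi> p\<^sub>n = \<phi> E\<^sup>c p\<^sub>n\<close> peels off the first variable:
  the coefficient of \<open>y\<^sub>1\<^sup>j y\<^sup>\<beta>\<close> in \<open>\<phi> p\<^sub>n\<close> is \<open>(n choose j) a\<^sub>j\<close> times that of \<open>y\<^sup>\<beta>\<close> in
  \<open>\<phi> p\<^sub>n\<^sub>-\<^sub>j\<close>. Peeling off all variables yields the expansion
  \<open>\<phi> p\<^sub>n = \<Sum>\<^sub>k (n choose k) (\<epsilon> \<phi> p\<^sub>n\<^sub>-\<^sub>k) p\<^sub>k\<close>; applying \<open>\<theta>\<close> and \<open>\<epsilon>\<close> gives the theorem.\<close>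

lemma support_subset_lessThan:
  fixes \<beta> :: "nat \<Rightarrow> nat"
  shows "\<forall>i\<ge>m. \<beta> i = 0 \<Longrightarrow> {i. \<beta> i \<noteq> 0} \<subseteq> {..<m}"
  by (auto intro: leI)

lemma monomials_iff_eventually_zero: "\<beta> \<in> monomials \<longleftrightarrow> (\<exists>m. \<forall>i\<ge>m. \<beta> i = 0)"
proof
  assume "\<beta> \<in> monomials"
  then obtain m where "\<forall>i\<in>{i. \<beta> i \<noteq> 0}. i < m"
    unfolding monomials_def using finite_nat_set_iff_bounded by blast
  then show "\<exists>m. \<forall>i\<ge>m. \<beta> i = 0" using leD by blast
next
  assume "\<exists>m. \<forall>i\<ge>m. \<beta> i = 0"
  then obtain m where "{i. \<beta> i \<noteq> 0} \<subseteq> {..<m}" using support_subset_lessThan by blast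
  then show "\<beta> \<in> monomials" unfolding monomials_def using finite_subset by blast
qed

lemma mdeg_eq_sum_lessThan: "\<forall>i\<ge>m. \<beta> i = 0 \<Longrightarrow> mdeg \<beta> = (\<Sum>i<m. \<beta> i)"
  unfolding mdeg_def by (rule sum.mono_neutral_left) (auto dest: support_subset_lessThan)

lemma finite_partitions: "finite (partitions n)"
proof -
  have "partitions n \<subseteq> mset ` {xs. set xs \<subseteq> {0..n} \<and> length xs \<le> n}"
  proof
    fix M assume M: "M \<in> partitions n"
    obtain xs where xs: "M = mset xs" by (metis ex_mset)
    have pos: "\<forall>i\<in>#M. 0 < i" and sum: "sum_mset M = n"
      using M by (auto simp: partitions_def)
    have "size M \<le> sum_mset M" using pos
      by (induction M) (auto simp: Suc_le_eq add_mono_thms_linordered_semiring(1))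
    moreover have "i \<le> sum_mset M" if "i \<in># M" for i
      using that by (induction M) auto
    ultimately show "M \<in> mset ` {xs. set xs \<subseteq> {0..n} \<and> length xs \<le> n}"
      using sum xs by auto
  qed
  moreover have "finite (mset ` {xs. set xs \<subseteq> {0..n} \<and> length xs \<le> n})"
    by (intro finite_imageI finite_lists_length_le) auto
  ultimately show ?thesis by (rule finite_subset)
qed

lemma binom_seq_eq:
  assumes "\<beta> \<in> monomials"
  shows "binom_seq a n \<beta> =
    (if mdeg \<beta> = n then fact n * (\<Prod>i\<in>{i. \<beta> i \<noteq> 0}. a (\<beta> i) / fact (\<beta> i)) else 0)"
proof -
  define S where "S = {i. \<beta> i \<noteq> 0}"
  define shape where "shape = image_mset \<beta> (mset_set S)"
  have "finite S" using assms by (simp add: S_def monomials_def)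
  have "binom_seq a n \<beta> = (\<Sum>lam\<in>partitions n. if lam = shape then
      (fact n / (\<Prod>i\<in>#lam. fact i)) * (\<Prod>i\<in>#lam. a i) else 0)"
    unfolding binom_seq_def msym_def using assms by (auto simp: S_def shape_def intro!: sum.cong)
  also have "\<dots> = (if shape \<in> partitions n
      then (fact n / (\<Prod>i\<in>#shape. fact i)) * (\<Prod>i\<in>#shape. a i) else 0)"
    using finite_partitions by simp
  also have "shape \<in> partitions n \<longleftrightarrow> mdeg \<beta> = n"
    using \<open>finite S\<close> by (auto simp: partitions_def shape_def mdeg_def S_def sum_unfold_sum_mset)
  also have "(\<Prod>i\<in>#shape. fact i) = (\<Prod>i\<in>S. fact (\<beta> i) :: complex)"
    by (simp add: shape_def prod_unfold_prod_mset image_mset.compositionality o_def)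
  also have "(\<Prod>i\<in>#shape. a i) = (\<Prod>i\<in>S. a (\<beta> i))"
    by (simp add: shape_def prod_unfold_prod_mset image_mset.compositionality o_def)
  finally show ?thesis by (simp add: S_def prod_dividef)
qed

lemma binom_seq_not_monomial: "\<beta> \<notin> monomials \<Longrightarrow> binom_seq a n \<beta> = 0"
  unfolding binom_seq_def msym_def by simp

lemma binom_seq_eq_bounded:
  assumes "a 0 = 1" and "\<forall>i\<ge>m. \<beta> i = 0"
  shows "binom_seq a n \<beta> =
    (if (\<Sum>i<m. \<beta> i) = n then fact n * (\<Prod>i<m. a (\<beta> i) / fact (\<beta> i)) else 0)"
proof -
  have "(\<Prod>i\<in>{i. \<beta> i \<noteq> 0}. a (\<beta> i) / fact (\<beta> i)) = (\<Prod>i<m. a (\<beta> i) / fact (\<beta> i))"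
    using assms by (intro prod.mono_neutral_left) (auto dest: support_subset_lessThan)
  moreover have "\<beta> \<in> monomials"
    using assms(2) monomials_iff_eventually_zero by blast
  ultimately show ?thesis
    using binom_seq_eq mdeg_eq_sum_lessThan[OF assms(2)] by simp
qed

lemma binom_seq_support: "binom_seq a n \<beta> \<noteq> 0 \<Longrightarrow> \<beta> \<in> monomials \<and> mdeg \<beta> \<le> n"
  using binom_seq_eq binom_seq_not_monomial by (metis order_refl)

lemma msym_permute:
  assumes "bij \<sigma>"
  shows "msym lam (\<beta> \<circ> \<sigma>) = msym lam \<beta>"
proof -
  have "inj \<sigma>" and "surj \<sigma>" using assms bij_is_inj bij_is_surj by auto
  have supp: "{i. (\<beta> \<circ> \<sigma>) i \<noteq> 0} = \<sigma> -` {i. \<beta> i \<noteq> 0}" by auto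
  have image: "\<sigma> ` (\<sigma> -` {i. \<beta> i \<noteq> 0}) = {i. \<beta> i \<noteq> 0}"
    using \<open>surj \<sigma>\<close> by (rule surj_image_vimage_eq)
  have monomial: "\<beta> \<circ> \<sigma> \<in> monomials \<longleftrightarrow> \<beta> \<in> monomials"
    unfolding monomials_def supp mem_Collect_eq
    by (metis finite_imageI finite_vimageI image \<open>inj \<sigma>\<close>)
  have "image_mset (\<beta> \<circ> \<sigma>) (mset_set (\<sigma> -` {i. \<beta> i \<noteq> 0}))
      = image_mset \<beta> (image_mset \<sigma> (mset_set (\<sigma> -` {i. \<beta> i \<noteq> 0})))"
    by (simp add: image_mset.compositionality)
  also have "\<dots> = image_mset \<beta> (mset_set {i. \<beta> i \<noteq> 0})"
    by (simp only: image_mset_mset_set[OF inj_on_subset[OF \<open>inj \<sigma>\<close> subset_UNIV]] image)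
  finally show ?thesis unfolding msym_def supp monomial by simp
qed

lemma binom_seq_in_Lambda: "binom_seq a n \<in> Lambda"
  unfolding Lambda_def using binom_seq_support
  by (auto simp: binom_seq_def msym_permute)

lemma Lambda_degree_bound: "f \<in> Lambda \<Longrightarrow> \<exists>D. \<forall>\<beta>. f \<beta> \<noteq> 0 \<longrightarrow> \<beta> \<in> monomials \<and> mdeg \<beta> \<le> D"
  unfolding Lambda_def by blast

lemma zero_in_Lambda: "(\<lambda>\<beta>. 0) \<in> Lambda"
  unfolding Lambda_def by simp

lemma add_in_Lambda:
  assumes "p \<in> Lambda" and "q \<in> Lambda"
  shows "(\<lambda>\<beta>. p \<beta> + q \<beta>) \<in> Lambda"
proof -
  obtain d1 d2 where "\<forall>\<beta>. p \<beta> \<noteq> 0 \<longrightarrow> mdeg \<beta> \<le> d1" and "\<forall>\<beta>. q \<beta> \<noteq> 0 \<longrightarrow> mdeg \<beta> \<le> d2"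
    using assms unfolding Lambda_def by blast
  then have "\<forall>\<beta>. p \<beta> + q \<beta> \<noteq> 0 \<longrightarrow> mdeg \<beta> \<le> max d1 d2"
    by (metis add.right_neutral le_max_iff_disj)
  with assms show ?thesis unfolding Lambda_def by (auto, metis add.right_neutral)
qed

lemma smult_in_Lambda: "p \<in> Lambda \<Longrightarrow> (\<lambda>\<beta>. c * p \<beta>) \<in> Lambda"
  unfolding Lambda_def by auto

lemma sum_in_Lambda:
  "finite K \<Longrightarrow> \<forall>k\<in>K. f k \<in> Lambda \<Longrightarrow> (\<lambda>\<beta>. \<Sum>k\<in>K. c k * f k \<beta>) \<in> Lambda"
proof (induction K rule: finite_induct)
  case empty
  then show ?case by (simp add: zero_in_Lambda)
next
  case (insert x F)
  then show ?case using add_in_Lambda[OF smult_in_Lambda[of "f x" "c x"]] by simp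
qed

lemma linear_on_Lambda_closed:
  assumes "linear_on_Lambda \<theta>" and "p \<in> Lambda"
  shows "\<theta> p \<in> Lambda"
  using assms unfolding linear_on_Lambda_def by blast

lemma linear_on_Lambda_zero:
  assumes "linear_on_Lambda \<theta>"
  shows "\<theta> (\<lambda>\<beta>. 0) = (\<lambda>\<beta>. 0)"
proof -
  have "\<theta> (\<lambda>\<beta>. 0 * p \<beta>) = (\<lambda>\<beta>. 0 * \<theta> p \<beta>)" if "p \<in> Lambda" for p
    using assms that unfolding linear_on_Lambda_def by blast
  from this[OF zero_in_Lambda] show ?thesis by simp
qed

lemma linear_on_Lambda_sum:
  assumes "linear_on_Lambda \<theta>"
  shows "finite K \<Longrightarrow> \<forall>k\<in>K. f k \<in> Lambda \<Longrightarrow>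
    \<theta> (\<lambda>\<beta>. \<Sum>k\<in>K. c k * f k \<beta>) = (\<lambda>\<beta>. \<Sum>k\<in>K. c k * \<theta> (f k) \<beta>)"
proof (induction K rule: finite_induct)
  case empty
  then show ?case by (simp add: linear_on_Lambda_zero[OF assms])
next
  case (insert x F)
  have "(\<lambda>\<beta>. c x * f x \<beta>) \<in> Lambda" and "(\<lambda>\<beta>. \<Sum>k\<in>F. c k * f k \<beta>) \<in> Lambda"
    using insert by (simp_all add: smult_in_Lambda sum_in_Lambda)
  moreover have "\<And>p q. p \<in> Lambda \<Longrightarrow> q \<in> Lambda \<Longrightarrow>
      \<theta> (\<lambda>\<beta>. p \<beta> + q \<beta>) = (\<lambda>\<beta>. \<theta> p \<beta> + \<theta> q \<beta>)"
    using assms unfolding linear_on_Lambda_def by blast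
  ultimately have "\<theta> (\<lambda>\<beta>. c x * f x \<beta> + (\<Sum>k\<in>F. c k * f k \<beta>))
      = (\<lambda>\<beta>. \<theta> (\<lambda>\<beta>. c x * f x \<beta>) \<beta> + \<theta> (\<lambda>\<beta>. \<Sum>k\<in>F. c k * f k \<beta>) \<beta>)"
    by blast
  moreover have "\<theta> (\<lambda>\<beta>. c x * f x \<beta>) = (\<lambda>\<beta>. c x * \<theta> (f x) \<beta>)"
    using insert assms unfolding linear_on_Lambda_def by blast
  ultimately show ?case using insert by simp
qed

lemma shift_in_eventually_zero: "\<forall>i\<ge>m. \<beta> i = 0 \<Longrightarrow> \<forall>i\<ge>Suc m. shift_in j \<beta> i = 0"
  by (auto simp: shift_in_def)

lemma shift_in_not_monomial:
  assumes "\<beta> \<notin> monomials"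
  shows "shift_in j \<beta> \<notin> monomials"
proof
  assume "shift_in j \<beta> \<in> monomials"
  then obtain m where "\<forall>i\<ge>m. shift_in j \<beta> i = 0"
    by (auto simp: monomials_iff_eventually_zero)
  then have "\<forall>i\<ge>m. \<beta> i = 0"
    by (metis le_SucI nat.distinct(1) diff_Suc_1 shift_in_def)
  with assms show False
    using monomials_iff_eventually_zero by blast
qed

lemma sum_lessThan_shift_in: "(\<Sum>i<Suc m. shift_in j \<beta> i) = j + (\<Sum>i<m. \<beta> i)"
  by (simp add: sum.lessThan_Suc_shift shift_in_def del: sum.lessThan_Suc)

lemma prod_lessThan_shift_in: "(\<Prod>i<Suc m. g (shift_in j \<beta> i)) = g j * (\<Prod>i<m. g (\<beta> i))"
  by (simp add: prod.lessThan_Suc_shift shift_in_def del: prod.lessThan_Suc)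

lemma shift_in_head_tail: "shift_in (\<beta> 0) (\<lambda>i. \<beta> (Suc i)) = \<beta>"
  by (auto simp: shift_in_def fun_eq_iff)

lemma mdeg_shift_in_ge: "shift_in j \<beta> \<in> monomials \<Longrightarrow> j \<le> mdeg (shift_in j \<beta>)"
proof (cases "j = 0")
  case False
  assume "shift_in j \<beta> \<in> monomials"
  then have "finite {i. shift_in j \<beta> i \<noteq> 0}" by (simp add: monomials_def)
  moreover have "0 \<in> {i. shift_in j \<beta> i \<noteq> 0}" using False by (simp add: shift_in_def)
  ultimately show ?thesis
    using member_le_sum[of 0 _ "shift_in j \<beta>"] by (simp add: mdeg_def shift_in_def)
qed simp

lemma Eshift_eq_sum_atMost:
  assumes "\<forall>\<beta>. f \<beta> \<noteq> 0 \<longrightarrow> \<beta> \<in> monomials \<and> mdeg \<beta> \<le> D0" and "D0 \<le> D"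
  shows "Eshift c f \<beta> = (\<Sum>j\<le>D. f (shift_in j \<beta>) * c ^ j)"
proof -
  have "{j. f (shift_in j \<beta>) \<noteq> 0} \<subseteq> {..D}"
    using assms mdeg_shift_in_ge by fastforce
  then show ?thesis unfolding Eshift_def
    by (intro sum.mono_neutral_cong_left) (auto simp: mult.commute)
qed

lemma Eshift_binom_seq:
  assumes "a 0 = 1"
  shows "Eshift c (binom_seq a n) \<beta> =
    (\<Sum>k\<le>n. of_nat (n choose k) * a k * c ^ k * binom_seq a (n - k) \<beta>)"
proof -
  have "Eshift c (binom_seq a n) \<beta> = (\<Sum>k\<le>n. binom_seq a n (shift_in k \<beta>) * c ^ k)"
    using binom_seq_support by (intro Eshift_eq_sum_atMost) auto
  also have "\<dots> = (\<Sum>k\<le>n. of_nat (n choose k) * a k * c ^ k * binom_seq a (n - k) \<beta>)"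
  proof (rule sum.cong[OF refl])
    fix k assume "k \<in> {..n}"
    show "binom_seq a n (shift_in k \<beta>) * c ^ k =
        of_nat (n choose k) * a k * c ^ k * binom_seq a (n - k) \<beta>"
    proof (cases "\<beta> \<in> monomials")
      case False
      then show ?thesis by (simp add: binom_seq_not_monomial shift_in_not_monomial)
    next
      case True
      then obtain m where m: "\<forall>i\<ge>m. \<beta> i = 0" by (auto simp: monomials_iff_eventually_zero)
      define d where "d = (\<Sum>i<m. \<beta> i)"
      define P where "P = (\<Prod>i<m. a (\<beta> i) / fact (\<beta> i))"
      have "fact n = (of_nat (n choose k) * fact k * fact (n - k) :: complex)"
        using \<open>k \<in> {..n}\<close> by (simp add: binomial_fact)
      moreover have "binom_seq a n (shift_in k \<beta>) =
          (if k + d = n then fact n * (a k / fact k * P) else 0)"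
        using binom_seq_eq_bounded[of a "Suc m" "shift_in k \<beta>", OF assms shift_in_eventually_zero[OF m]]
        unfolding sum_lessThan_shift_in prod_lessThan_shift_in[where g="\<lambda>x. a x / fact x"]
        by (simp add: d_def P_def)
      moreover have "binom_seq a (n - k) \<beta> = (if d = n - k then fact (n - k) * P else 0)"
        using binom_seq_eq_bounded[of a m \<beta>, OF assms m] by (simp add: d_def P_def)
      ultimately show ?thesis
        using \<open>k \<in> {..n}\<close> by auto
    qed
  qed
  finally show ?thesis .
qed

lemma shift_invariant_binom_seq_shift_in:
  assumes "a 0 = 1" and "linear_on_Lambda \<phi>" and "shift_invariant \<phi>"
  shows "\<phi> (binom_seq a n) (shift_in j \<beta>) = of_nat (n choose j) * a j * \<phi> (binom_seq a (n - j)) \<beta>"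
proof -
  have "\<phi> (binom_seq a n) \<in> Lambda"
    by (rule linear_on_Lambda_closed[OF assms(2) binom_seq_in_Lambda])
  then obtain D0 where D0: "\<forall>\<beta>. \<phi> (binom_seq a n) \<beta> \<noteq> 0 \<longrightarrow> \<beta> \<in> monomials \<and> mdeg \<beta> \<le> D0"
    using Lambda_degree_bound by blast
  define D where "D = max D0 (max n j)"
  have "\<forall>c. (\<Sum>i\<le>D. \<phi> (binom_seq a n) (shift_in i \<beta>) * c ^ i)
      = (\<Sum>i\<le>D. of_nat (n choose i) * a i * \<phi> (binom_seq a (n - i)) \<beta> * c ^ i)"
    (is "\<forall>c. ?lhs c = ?rhs c")
  proof
    fix c
    have "(\<Sum>i\<le>D. \<phi> (binom_seq a n) (shift_in i \<beta>) * c ^ i) = Eshift c (\<phi> (binom_seq a n)) \<beta>"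
      using Eshift_eq_sum_atMost[OF D0, of D c \<beta>] by (simp add: D_def)
    also have "\<dots> = \<phi> (Eshift c (binom_seq a n)) \<beta>"
      using assms(3) binom_seq_in_Lambda unfolding shift_invariant_def by simp
    also have "Eshift c (binom_seq a n)
        = (\<lambda>\<beta>. \<Sum>k\<le>n. (of_nat (n choose k) * a k * c ^ k) * binom_seq a (n - k) \<beta>)"
      using Eshift_binom_seq[of a, OF assms(1)] by (simp add: fun_eq_iff)
    also have "\<phi> \<dots> \<beta> = (\<Sum>k\<le>n. of_nat (n choose k) * a k * c ^ k * \<phi> (binom_seq a (n - k)) \<beta>)"
      using linear_on_Lambda_sum[OF assms(2), of "{..n}" "\<lambda>k. binom_seq a (n - k)"]
      by (simp add: binom_seq_in_Lambda)
    also have "\<dots> = (\<Sum>k\<le>D. of_nat (n choose k) * a k * c ^ k * \<phi> (binom_seq a (n - k)) \<beta>)"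
      by (rule sum.mono_neutral_left) (auto simp: D_def)
    also have "\<dots> = (\<Sum>i\<le>D. of_nat (n choose i) * a i * \<phi> (binom_seq a (n - i)) \<beta> * c ^ i)"
      by (rule sum.cong) (simp_all only: mult_ac)
    finally show "?lhs c = ?rhs c" .
  qed
  then have "\<forall>i\<le>D. \<phi> (binom_seq a n) (shift_in i \<beta>) = of_nat (n choose i) * a i * \<phi> (binom_seq a (n - i)) \<beta>"
    by (simp only: polyfun_eq_coeffs)
  then show ?thesis by (simp add: D_def)
qed

lemma shift_invariant_binom_seq_eq_bounded:
  assumes "a 0 = 1" and "linear_on_Lambda \<phi>" and "shift_invariant \<phi>"
    and "\<forall>i\<ge>m. \<beta> i = 0"
  shows "\<phi> (binom_seq a n) \<beta> = (if (\<Sum>i<m. \<beta> i) \<le> n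
    then fact n / fact (n - (\<Sum>i<m. \<beta> i)) * (\<Prod>i<m. a (\<beta> i) / fact (\<beta> i))
         * epsilon (\<phi> (binom_seq a (n - (\<Sum>i<m. \<beta> i))))
    else 0)"
  using assms(4)
proof (induction m arbitrary: n \<beta>)
  case 0
  then have "\<beta> = (\<lambda>_. 0)" by auto
  then show ?case by (simp add: epsilon_def)
next
  case (Suc m)
  define \<beta>' where "\<beta>' = (\<lambda>i. \<beta> (Suc i))"
  define d where "d = (\<Sum>i<m. \<beta>' i)"
  define P where "P = (\<Prod>i<m. a (\<beta>' i) / fact (\<beta>' i))"
  have \<beta>: "shift_in (\<beta> 0) \<beta>' = \<beta>"
    unfolding \<beta>'_def by (rule shift_in_head_tail)
  have sum_eq: "(\<Sum>i<Suc m. \<beta> i) = \<beta> 0 + d"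
    using sum_lessThan_shift_in[where m=m and j="\<beta> 0" and \<beta>=\<beta>'] by (simp only: \<beta> d_def)
  have prod_eq: "(\<Prod>i<Suc m. a (\<beta> i) / fact (\<beta> i)) = a (\<beta> 0) / fact (\<beta> 0) * P"
    using prod_lessThan_shift_in[where g="\<lambda>x. a x / fact x" and m=m and j="\<beta> 0" and \<beta>=\<beta>'] by (simp only: \<beta> P_def)
  have "\<forall>i\<ge>m. \<beta>' i = 0" using Suc.prems by (simp add: \<beta>'_def)
  then have IH: "\<phi> (binom_seq a k) \<beta>' =
      (if d \<le> k then fact k / fact (k - d) * P * epsilon (\<phi> (binom_seq a (k - d))) else 0)" for k
    using Suc.IH by (simp add: d_def P_def)
  have "\<phi> (binom_seq a n) \<beta> = of_nat (n choose \<beta> 0) * a (\<beta> 0) * \<phi> (binom_seq a (n - \<beta> 0)) \<beta>'"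
    using shift_invariant_binom_seq_shift_in[of a \<phi>, OF assms(1-3)] by (metis \<beta>)
  also have "\<dots> = (if \<beta> 0 + d \<le> n
      then fact n / fact (n - (\<beta> 0 + d)) * (a (\<beta> 0) / fact (\<beta> 0) * P)
           * epsilon (\<phi> (binom_seq a (n - (\<beta> 0 + d))))
      else 0)"
    by (cases "\<beta> 0 \<le> n") (auto simp: IH binomial_fact diff_diff_add)
  finally show ?case unfolding sum_eq prod_eq .
qed

lemma shift_invariant_binom_seq_expansion:
  assumes "a 0 = 1" and "linear_on_Lambda \<phi>" and "shift_invariant \<phi>"
  shows "\<phi> (binom_seq a n) =
    (\<lambda>\<beta>. \<Sum>k\<le>n. (of_nat (n choose k) * epsilon (\<phi> (binom_seq a (n - k)))) * binom_seq a k \<beta>)"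
proof
  fix \<beta>
  show "\<phi> (binom_seq a n) \<beta> =
      (\<Sum>k\<le>n. (of_nat (n choose k) * epsilon (\<phi> (binom_seq a (n - k)))) * binom_seq a k \<beta>)"
  proof (cases "\<beta> \<in> monomials")
    case True
    then obtain m where m: "\<forall>i\<ge>m. \<beta> i = 0" by (auto simp: monomials_iff_eventually_zero)
    define d where "d = (\<Sum>i<m. \<beta> i)"
    define P where "P = (\<Prod>i<m. a (\<beta> i) / fact (\<beta> i))"
    have "(\<Sum>k\<le>n. (of_nat (n choose k) * epsilon (\<phi> (binom_seq a (n - k)))) * binom_seq a k \<beta>)
        = (\<Sum>k\<le>n. if k = d then of_nat (n choose d) * epsilon (\<phi> (binom_seq a (n - d))) * (fact d * P) else 0)"
      using binom_seq_eq_bounded[of a m \<beta>, OF assms(1) m] by (intro sum.cong) (auto simp: d_def P_def)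
    also have "\<dots> = (if d \<le> n then fact n / fact (n - d) * P * epsilon (\<phi> (binom_seq a (n - d))) else 0)"
      by (simp add: binomial_fact)
    also have "\<dots> = \<phi> (binom_seq a n) \<beta>"
      using shift_invariant_binom_seq_eq_bounded[of a \<phi> m \<beta>, OF assms m] by (simp add: d_def P_def)
    finally show ?thesis ..
  next
    case False
    have "\<phi> (binom_seq a n) \<in> Lambda"
      by (rule linear_on_Lambda_closed[OF assms(2) binom_seq_in_Lambda])
    with False have "\<phi> (binom_seq a n) \<beta> = 0"
      using Lambda_degree_bound by blast
    with False show ?thesis
      by (simp add: binom_seq_not_monomial)
  qed
qed

theorem mainTheorem11:
  fixes a :: "nat \<Rightarrow> complex" and \<theta> \<phi> :: "symfun \<Rightarrow> symfun" and n :: nat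
  assumes "a 0 = 1" and "a 1 \<noteq> 0"
    and "linear_on_Lambda \<theta>" and "shift_invariant \<theta>"
    and "linear_on_Lambda \<phi>" and "shift_invariant \<phi>"
  shows "epsilon (\<theta> (\<phi> (binom_seq a n))) =
    (\<Sum>k=0..n. of_nat (n choose k) * epsilon (\<theta> (binom_seq a k))
                 * epsilon (\<phi> (binom_seq a (n - k))))"
proof -
  have "\<theta> (\<phi> (binom_seq a n)) =
      (\<lambda>\<beta>. \<Sum>k\<le>n. (of_nat (n choose k) * epsilon (\<phi> (binom_seq a (n - k)))) * \<theta> (binom_seq a k) \<beta>)"
    unfolding shift_invariant_binom_seq_expansion[of a \<phi> n, OF assms(1,5,6)]
    using linear_on_Lambda_sum[OF assms(3), of "{..n}" "binom_seq a"] by (simp add: binom_seq_in_Lambda)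
  then show ?thesis
    by (simp add: epsilon_def atLeast0AtMost mult_ac)
qed

end
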